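(* Consider the waning-immunity model described in the context. There exists a constant $C>0$ such that for all sufficiently small $\delta\ge0$, the set of values $I^*$ of endemic equilibria with $I^*\in[0,1]$ is contained in $J_1\cup J_2$, where $J_i=[y_i-C\sqrt\delta,\,y_i+C\sqrt\delta]$ and $y_1\le y_2$ are the (real) roots of $$1+\frac{r}{\beta_0x+\mu}-\frac{\beta_n}{\beta_nx+\mu+\omega_n}-\frac{\omega_n\beta_0}{(\beta_0x+\mu)(\beta_nx+\mu+\omega_n)}=0.$$ In particular, if this equation has no real roots, or no roots in $[0,1]$, then for $\delta$ small enough there are no endemic equilibria with $I^*\in[0,1]$. The latter is the case when $(\omega_n+\mu)(\mu+r)>\beta_0\omega_n+\beta_n\mu$. If $(\omega_n+\mu)(\mu+r)<\beta_0\omega_n+\beta_n\mu$, then the equation has exactly one root $y$ in $[0,1]$; and if $(\omega_n+\mu)(\mu+r)=\beta_0\omega_n+\beta_n\mu$, then $x=0$ is a root.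
   Context: Model: Fix an integer $n\ge 1$ and parameters $\delta\ge 0$ (rate of waning immunity), $\omega\ge 0$ (vaccination rate), $r>0$ (recovery rate), $\mu>0$ (birth = death rate), coverages $p_0=0$, $p_1,\dots,p_n\in[0,1]$, and transmission rates $0\le\beta_0\le\beta_1\le\dots\le\beta_n$ with $\beta_0<\beta_n$. Write $\omega_i=p_i\omega$, $\delta_i=(1-p_i)\delta$ (so $\delta_0=\delta$). The ODE system for $(S_0,\dots,S_n,I)$ is $$S_0'=\sum_{i=1}^n\omega_iS_i-\delta S_0+rI-\beta_0IS_0-\mu S_0,$$ $$S_i'=-\omega_iS_i+\delta_{i-1}S_{i-1}-\delta_iS_i-\beta_iIS_i-\mu S_i\quad(1\le i\le n-1),$$ $$S_n'=\mu-\omega_nS_n+\delta_{n-1}S_{n-1}-\beta_nIS_n-\mu S_n,$$ $$I'=I\sum_{i=0}^n\beta_iS_i-rI-\mu I,$$ with the normalization $\sum_iS_i+I=1$. An endemic equilibrium is an equilibrium $(S_0^*,\dots,S_n^*,I^* )$ of this system satisfying the normalization with $I^*\neq0$. *)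

theory Defs
  imports Complex_Main
begin

text \<open>Parameters: d = delta (waning rate), w = omega (vaccination rate), r (recovery),
  mu (birth = death rate), coverages p i, transmission rates beta i.
  omega_i = p i * w, delta_i = (1 - p i) * d.\<close>

definition endemic_eq ::
  "nat \<Rightarrow> real \<Rightarrow> real \<Rightarrow> real \<Rightarrow> real \<Rightarrow> (nat \<Rightarrow> real) \<Rightarrow> (nat \<Rightarrow> real)
   \<Rightarrow> (nat \<Rightarrow> real) \<Rightarrow> real \<Rightarrow> bool" where
  "endemic_eq n d w r mu p beta S I \<longleftrightarrow>
     (let om = (\<lambda>i. p i * w); de = (\<lambda>i. (1 - p i) * d) in
       (\<Sum>i=1..n. om i * S i) - d * S 0 + r * I - beta 0 * I * S 0 - mu * S 0 = 0 \<and>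
       (\<forall>i\<in>{1..n-1}. - om i * S i + de (i-1) * S (i-1) - de i * S i
                        - beta i * I * S i - mu * S i = 0) \<and>
       mu - om n * S n + de (n-1) * S (n-1) - beta n * I * S n - mu * S n = 0 \<and>
       I * (\<Sum>i=0..n. beta i * S i) - r * I - mu * I = 0 \<and>
       (\<Sum>i=0..n. S i) + I = 1 \<and>
       I \<noteq> 0)"

definition wi_F :: "real \<Rightarrow> real \<Rightarrow> real \<Rightarrow> real \<Rightarrow> real \<Rightarrow> real \<Rightarrow> real" where
  "wi_F r mu b0 bn wn x =
     1 + r / (b0 * x + mu) - bn / (bn * x + mu + wn)
       - wn * b0 / ((b0 * x + mu) * (bn * x + mu + wn))"

definition wi_root :: "real \<Rightarrow> real \<Rightarrow> real \<Rightarrow> real \<Rightarrow> real \<Rightarrow> real \<Rightarrow> bool" where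
  "wi_root r mu b0 bn wn x \<longleftrightarrow>
     b0 * x + mu \<noteq> 0 \<and> bn * x + mu + wn \<noteq> 0 \<and> wi_F r mu b0 bn wn x = 0"

end

theory Submission
  imports Defs "HOL-Library.Quadratic_Discriminant"
begin

text \<open>At an endemic equilibrium each intermediate compartment satisfies
  S_i (omega_i + delta_i + beta_i I + mu) = delta_(i-1) S_(i-1), so S_1, ..., S_(n-1) and the
  inflow delta_(n-1) S_(n-1) into S_n are O(delta) S_0, and S_0 itself is bounded. Eliminating S_0
  and S_n from the normalisation and the equation for I shows that I is, up to an error O(delta),
  a root of the quadratic obtained by clearing the denominators of the limiting equation. A
  quadratic that is O(delta) at a point has a root within O(sqrt delta) of it (the square root is
  the price of a double root), and a quadratic without roots in [0,1] is bounded away from zero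
  there. The remaining claims are sign considerations: on [0,1] the quadratic has nonnegative
  leading coefficients and constant term (omega_n + mu)(mu + r) - beta_0 omega_n - beta_n mu.\<close>

section \<open>Roots of perturbed quadratics\<close>

lemma quadratic_factor:
  fixes a b c x :: real
  assumes "a \<noteq> 0" and "0 \<le> discrim a b c"
  shows "a * x\<^sup>2 + b * x + c =
    a * (x - (-b + sqrt (discrim a b c)) / (2 * a)) * (x - (-b - sqrt (discrim a b c)) / (2 * a))"
proof -
  define s where "s = sqrt (discrim a b c)"
  have "s * s = b\<^sup>2 - 4 * a * c"
    using assms(2) by (simp add: s_def discrim_def)
  with assms(1) show ?thesis
    unfolding s_def[symmetric] by (simp add: field_simps power2_eq_square) algebra
qed

lemma quadratic_root_sq_dist_le:
  fixes a b c x :: real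
  assumes "a \<noteq> 0" and "0 \<le> discrim a b c"
  shows "\<exists>y. a * y\<^sup>2 + b * y + c = 0 \<and> \<bar>a\<bar> * (x - y)\<^sup>2 \<le> \<bar>a * x\<^sup>2 + b * x + c\<bar>"
proof -
  define y1 where "y1 = (-b + sqrt (discrim a b c)) / (2 * a)"
  define y2 where "y2 = (-b - sqrt (discrim a b c)) / (2 * a)"
  have factor: "a * z\<^sup>2 + b * z + c = a * (z - y1) * (z - y2)" for z
    unfolding y1_def y2_def using quadratic_factor[OF assms] .
  obtain y where y: "y = y1 \<or> y = y2" and "\<bar>x - y\<bar> \<le> \<bar>x - y1\<bar>" "\<bar>x - y\<bar> \<le> \<bar>x - y2\<bar>"
    by (metis linear)
  then have "\<bar>x - y\<bar> * \<bar>x - y\<bar> \<le> \<bar>x - y1\<bar> * \<bar>x - y2\<bar>"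
    by (intro mult_mono) auto
  then have "\<bar>a\<bar> * (x - y)\<^sup>2 \<le> \<bar>a\<bar> * (\<bar>x - y1\<bar> * \<bar>x - y2\<bar>)"
    by (intro mult_left_mono) (simp_all add: power2_eq_square flip: abs_mult)
  also have "\<dots> = \<bar>a * x\<^sup>2 + b * x + c\<bar>"
    by (simp add: factor abs_mult)
  finally show ?thesis
    using y factor by auto
qed

lemma quadratic_near_real_root:
  fixes a b c d x K :: real
  assumes "a \<noteq> 0" and "0 \<le> discrim a b c" and "0 \<le> d"
    and "\<bar>a * x\<^sup>2 + b * x + c\<bar> \<le> K * d"
  shows "\<exists>y. a * y\<^sup>2 + b * y + c = 0 \<and> \<bar>x - y\<bar> \<le> sqrt (K / \<bar>a\<bar>) * sqrt d"
proof -
  obtain y where y: "a * y\<^sup>2 + b * y + c = 0" and "\<bar>a\<bar> * (x - y)\<^sup>2 \<le> \<bar>a * x\<^sup>2 + b * x + c\<bar>"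
    using quadratic_root_sq_dist_le[OF assms(1,2)] by blast
  with assms(1,4) have "(x - y)\<^sup>2 \<le> K / \<bar>a\<bar> * d"
    by (simp add: field_simps)
  then have "\<bar>x - y\<bar> \<le> sqrt (K / \<bar>a\<bar>) * sqrt d"
    by (metis real_sqrt_abs real_sqrt_le_mono real_sqrt_mult)
  with y show ?thesis
    by blast
qed

lemma linear_near_root:
  fixes b c d x K :: real
  assumes "b \<noteq> 0" and "0 \<le> K" and "0 \<le> d" and "d \<le> 1" and "\<bar>b * x + c\<bar> \<le> K * d"
  shows "\<bar>x - -c / b\<bar> \<le> K / \<bar>b\<bar> * sqrt d"
proof -
  have "sqrt d * sqrt d \<le> sqrt d * 1"
    using assms(3,4) by (intro mult_left_mono) auto
  then have "d \<le> sqrt d"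
    using assms(3) by simp
  have "\<bar>x - -c / b\<bar> = \<bar>b * x + c\<bar> / \<bar>b\<bar>"
    using assms(1) by (simp add: field_simps flip: abs_divide)
  also have "\<dots> \<le> K * sqrt d / \<bar>b\<bar>"
    using assms(2,5) \<open>d \<le> sqrt d\<close> by (intro divide_right_mono) (auto intro: order_trans mult_left_mono)
  finally show ?thesis
    by simp
qed

lemma discrim_le_quadratic:
  fixes a b c x :: real
  shows "- discrim a b c \<le> 4 * \<bar>a\<bar> * \<bar>a * x\<^sup>2 + b * x + c\<bar>"
proof -
  have "4 * a * (a * x\<^sup>2 + b * x + c) = (2 * a * x + b)\<^sup>2 - discrim a b c"
    by (simp add: discrim_def power2_eq_square algebra_simps)
  then have "- discrim a b c \<le> 4 * a * (a * x\<^sup>2 + b * x + c)"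
    by simp
  also have "\<dots> \<le> \<bar>4 * a * (a * x\<^sup>2 + b * x + c)\<bar>"
    by (rule abs_ge_self)
  also have "\<dots> = 4 * \<bar>a\<bar> * \<bar>a * x\<^sup>2 + b * x + c\<bar>"
    by (simp add: abs_mult)
  finally show ?thesis .
qed

lemma quadratic_near_root:
  fixes a b c K :: real
  assumes nonconst: "a \<noteq> 0 \<or> b \<noteq> 0" and K: "0 \<le> K"
  shows "\<exists>C>0. \<exists>d0>0. \<forall>d x. 0 \<le> d \<longrightarrow> d \<le> d0 \<longrightarrow> \<bar>a * x\<^sup>2 + b * x + c\<bar> \<le> K * d \<longrightarrow>
           (\<exists>y. a * y\<^sup>2 + b * y + c = 0 \<and> \<bar>x - y\<bar> \<le> C * sqrt d)"
proof -
  consider (linear) "a = 0" | (real_roots) "a \<noteq> 0" "0 \<le> discrim a b c"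
    | (no_real_roots) "a \<noteq> 0" "discrim a b c < 0"
    by linarith
  then show ?thesis
  proof cases
    case linear
    with nonconst have b: "b \<noteq> 0" by simp
    have "\<forall>d x. 0 \<le> d \<longrightarrow> d \<le> 1 \<longrightarrow> \<bar>a * x\<^sup>2 + b * x + c\<bar> \<le> K * d \<longrightarrow>
        (\<exists>y. a * y\<^sup>2 + b * y + c = 0 \<and> \<bar>x - y\<bar> \<le> (K / \<bar>b\<bar> + 1) * sqrt d)"
    proof (intro allI impI)
      fix d x
      assume "0 \<le> d" "d \<le> 1" "\<bar>a * x\<^sup>2 + b * x + c\<bar> \<le> K * d"
      with linear linear_near_root[OF b K] have "\<bar>x - -c / b\<bar> \<le> K / \<bar>b\<bar> * sqrt d"
        by simp
      also have "\<dots> \<le> (K / \<bar>b\<bar> + 1) * sqrt d"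
        using \<open>0 \<le> d\<close> by (simp add: algebra_simps)
      finally show "\<exists>y. a * y\<^sup>2 + b * y + c = 0 \<and> \<bar>x - y\<bar> \<le> (K / \<bar>b\<bar> + 1) * sqrt d"
        using linear b by (intro exI[of _ "-c / b"]) simp
    qed
    moreover have "0 < K / \<bar>b\<bar> + 1"
      using K by (simp add: add_nonneg_pos)
    ultimately show ?thesis
      using zero_less_one by blast
  next
    case real_roots
    have "\<forall>d x. 0 \<le> d \<longrightarrow> d \<le> 1 \<longrightarrow> \<bar>a * x\<^sup>2 + b * x + c\<bar> \<le> K * d \<longrightarrow>
        (\<exists>y. a * y\<^sup>2 + b * y + c = 0 \<and> \<bar>x - y\<bar> \<le> (sqrt (K / \<bar>a\<bar>) + 1) * sqrt d)"
    proof (intro allI impI)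
      fix d x
      assume "0 \<le> d" "d \<le> 1" "\<bar>a * x\<^sup>2 + b * x + c\<bar> \<le> K * d"
      then obtain y where "a * y\<^sup>2 + b * y + c = 0" and "\<bar>x - y\<bar> \<le> sqrt (K / \<bar>a\<bar>) * sqrt d"
        using quadratic_near_real_root[OF real_roots] by blast
      moreover have "sqrt (K / \<bar>a\<bar>) * sqrt d \<le> (sqrt (K / \<bar>a\<bar>) + 1) * sqrt d"
        using \<open>0 \<le> d\<close> by (simp add: algebra_simps)
      ultimately show "\<exists>y. a * y\<^sup>2 + b * y + c = 0 \<and> \<bar>x - y\<bar> \<le> (sqrt (K / \<bar>a\<bar>) + 1) * sqrt d"
        by (blast intro: order_trans)
    qed
    moreover have "0 < sqrt (K / \<bar>a\<bar>) + 1"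
      using K by (simp add: add_nonneg_pos)
    ultimately show ?thesis
      using zero_less_one by blast
  next
    case no_real_roots
    define d0 where "d0 = - discrim a b c / (4 * \<bar>a\<bar> * (K + 1))"
    have "0 < d0"
      using no_real_roots K unfolding d0_def by (intro divide_pos_pos) auto
    have "K * d < \<bar>a * x\<^sup>2 + b * x + c\<bar>" if "0 \<le> d" "d \<le> d0" for d x
    proof -
      have "4 * \<bar>a\<bar> * (K * d) \<le> 4 * \<bar>a\<bar> * (K * d0)"
        using that K by (simp add: mult_left_mono)
      also have "\<dots> < 4 * \<bar>a\<bar> * ((K + 1) * d0)"
        using \<open>0 < d0\<close> no_real_roots(1) by simp
      also have "\<dots> = - discrim a b c"
        using no_real_roots(1) K by (simp add: d0_def)
      also have "\<dots> \<le> 4 * \<bar>a\<bar> * \<bar>a * x\<^sup>2 + b * x + c\<bar>"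
        by (rule discrim_le_quadratic)
      finally show ?thesis
        using no_real_roots(1) by simp
    qed
    with \<open>0 < d0\<close> show ?thesis
      by (intro exI[of _ 1] exI[of _ d0]) (auto simp: not_le[symmetric])
  qed
qed

lemma quadratic_nonneg_root_unique:
  fixes a b c y z :: real
  assumes "0 \<le> a" and "c < 0" and "0 \<le> y" and "0 \<le> z"
    and "a * y\<^sup>2 + b * y + c = 0" and "a * z\<^sup>2 + b * z + c = 0"
  shows "z = y"
proof (rule ccontr)
  assume "z \<noteq> y"
  moreover have "(z - y) * (a * (z + y) + b) = 0"
    using assms(5,6) by (simp add: power2_eq_square algebra_simps)
  ultimately have "b = - a * (z + y)"
    by simp
  with assms(6) have "c = a * z * y"
    by (simp add: power2_eq_square algebra_simps)
  moreover have "0 \<le> a * z * y"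
    using assms(1,3,4) by simp
  ultimately show False
    using assms(2) by simp
qed

lemma compact_nonvanishing_norm_bounded_below:
  fixes f :: "'a::topological_space \<Rightarrow> 'b::real_normed_vector"
  assumes "compact A" and "continuous_on A f" and "\<And>x. x \<in> A \<Longrightarrow> f x \<noteq> 0"
  shows "\<exists>m>0. \<forall>x\<in>A. m \<le> norm (f x)"
proof (cases "A = {}")
  case False
  have "continuous_on A (\<lambda>x. norm (f x))"
    using assms(2) by (intro continuous_intros)
  then obtain x0 where "x0 \<in> A" and "\<forall>x\<in>A. norm (f x0) \<le> norm (f x)"
    using continuous_attains_inf[OF assms(1) False] by blast
  with assms(3) show ?thesis
    by (intro exI[of _ "norm (f x0)"]) auto
qed (auto intro: exI[of _ 1])

section \<open>The limiting equation\<close>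

definition limit_poly :: "real \<Rightarrow> real \<Rightarrow> real \<Rightarrow> real \<Rightarrow> real \<Rightarrow> real \<Rightarrow> real" where
  "limit_poly r mu b0 bn wn x =
     b0 * bn * x\<^sup>2 + (b0 * (mu + wn) + bn * (mu + r - b0)) * x
       + ((wn + mu) * (mu + r) - b0 * wn - bn * mu)"

lemma continuous_on_limit_poly: "continuous_on A (limit_poly r mu b0 bn wn)"
  unfolding limit_poly_def[abs_def] by (intro continuous_intros)

lemma wi_F_mult_denominators:
  assumes "b0 * x + mu \<noteq> 0" and "bn * x + mu + wn \<noteq> 0"
  shows "wi_F r mu b0 bn wn x * ((b0 * x + mu) * (bn * x + mu + wn)) = limit_poly r mu b0 bn wn x"
proof -
  define P Q where "P = b0 * x + mu" and "Q = bn * x + mu + wn"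
  have "P \<noteq> 0" "Q \<noteq> 0"
    using assms by (simp_all add: P_def Q_def)
  have "wi_F r mu b0 bn wn x * (P * Q) =
      P * Q + r / P * (P * Q) - bn / Q * (P * Q) - wn * b0 / (P * Q) * (P * Q)"
    unfolding wi_F_def P_def[symmetric] Q_def[symmetric] by (simp only: ring_distribs mult_1)
  also have "\<dots> = P * Q + r * Q - bn * P - wn * b0"
    using \<open>P \<noteq> 0\<close> \<open>Q \<noteq> 0\<close> by simp
  finally show ?thesis
    by (simp add: P_def Q_def limit_poly_def power2_eq_square algebra_simps)
qed

lemma wi_root_iff_limit_poly:
  "wi_root r mu b0 bn wn x \<longleftrightarrow>
     b0 * x + mu \<noteq> 0 \<and> bn * x + mu + wn \<noteq> 0 \<and> limit_poly r mu b0 bn wn x = 0"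
proof (cases "b0 * x + mu \<noteq> 0 \<and> bn * x + mu + wn \<noteq> 0")
  case True
  then have "limit_poly r mu b0 bn wn x =
      wi_F r mu b0 bn wn x * ((b0 * x + mu) * (bn * x + mu + wn))"
    by (simp add: wi_F_mult_denominators)
  with True show ?thesis
    by (simp add: wi_root_def)
qed (auto simp: wi_root_def)

text \<open>Eliminating S_0 and S_n from the normalisation, the equation for I and the equation
  for S_n; T and Tb are the plain and the beta-weighted sums over the intermediate compartments,
  e is the inflow into S_n.\<close>

lemma limit_poly_residual:
  assumes "S0 + T + Sn + I = 1" and "b0 * S0 + Tb + bn * Sn = r + mu"
    and "Sn * (wn + bn * I + mu) = mu + e"
  shows "limit_poly r mu b0 bn wn I = (Tb - b0 * T) * (wn + bn * I + mu) + (bn - b0) * e"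
  using assms unfolding limit_poly_def power2_eq_square by algebra

context
  fixes r mu b0 bn wn :: real
  assumes r_nonneg: "0 \<le> r" and mu_pos: "0 < mu" and wn_nonneg: "0 \<le> wn"
    and b0_nonneg: "0 \<le> b0" and b0_less_bn: "b0 < bn"
begin

lemma limit_denominators_pos:
  assumes "- mu < bn * x"
  shows "0 < b0 * x + mu" and "0 < bn * x + mu + wn"
proof -
  have "- mu < b0 * x"
  proof (cases "0 \<le> x")
    case True
    with b0_nonneg have "0 \<le> b0 * x" by simp
    with mu_pos show ?thesis by linarith
  next
    case False
    then have "bn * x \<le> b0 * x"
      using b0_less_bn by (simp add: mult_right_mono_neg)
    with assms show ?thesis by simp
  qed
  then show "0 < b0 * x + mu" by simp
  show "0 < bn * x + mu + wn"
    using assms wn_nonneg by simp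
qed

lemma wi_root_iff_limit_poly_eq_0:
  assumes "- mu < bn * x"
  shows "wi_root r mu b0 bn wn x \<longleftrightarrow> limit_poly r mu b0 bn wn x = 0"
  using limit_denominators_pos[OF assms] by (auto simp: wi_root_iff_limit_poly)

lemma wi_root_iff_limit_poly_eq_0_nonneg:
  assumes "0 \<le> x"
  shows "wi_root r mu b0 bn wn x \<longleftrightarrow> limit_poly r mu b0 bn wn x = 0"
proof (rule wi_root_iff_limit_poly_eq_0)
  have "0 \<le> bn * x"
    using assms b0_nonneg b0_less_bn by simp
  with mu_pos show "- mu < bn * x" by linarith
qed

lemma wi_root_if_limit_root_near_nonneg:
  assumes "0 \<le> x" and "\<bar>x - y\<bar> \<le> mu / (2 * bn)" and "limit_poly r mu b0 bn wn y = 0"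
  shows "wi_root r mu b0 bn wn y"
proof -
  have "bn * (x - y) \<le> bn * \<bar>x - y\<bar>"
    using b0_nonneg b0_less_bn by (intro mult_left_mono) auto
  also have "\<dots> \<le> mu / 2"
    using assms(2) b0_nonneg b0_less_bn by (simp add: field_simps)
  finally have "bn * (x - y) \<le> mu / 2" .
  moreover have "0 \<le> bn * x"
    using assms(1) b0_nonneg b0_less_bn by simp
  ultimately have "- mu < bn * y"
    using mu_pos by (simp add: right_diff_distrib)
  with assms(3) show ?thesis
    using wi_root_iff_limit_poly_eq_0 by blast
qed

lemma limit_poly_near_root:
  assumes "0 \<le> K"
  shows "\<exists>C>0. \<exists>d0>0. \<forall>d x. 0 \<le> d \<longrightarrow> d \<le> d0 \<longrightarrow> 0 \<le> x \<longrightarrow>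
           \<bar>limit_poly r mu b0 bn wn x\<bar> \<le> K * d \<longrightarrow>
           (\<exists>y. wi_root r mu b0 bn wn y \<and> \<bar>x - y\<bar> \<le> C * sqrt d)"
proof -
  have "b0 * bn \<noteq> 0 \<or> b0 * (mu + wn) + bn * (mu + r - b0) \<noteq> 0"
    using b0_nonneg b0_less_bn mu_pos r_nonneg by (cases "b0 = 0") auto
  then have "\<exists>C>0. \<exists>d0>0. \<forall>d x. 0 \<le> d \<longrightarrow> d \<le> d0 \<longrightarrow> \<bar>limit_poly r mu b0 bn wn x\<bar> \<le> K * d \<longrightarrow>
      (\<exists>y. limit_poly r mu b0 bn wn y = 0 \<and> \<bar>x - y\<bar> \<le> C * sqrt d)"
    unfolding limit_poly_def by (rule quadratic_near_root[OF _ assms])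
  then obtain C d0 where "0 < C" "0 < d0" and near:
    "\<forall>d x. 0 \<le> d \<longrightarrow> d \<le> d0 \<longrightarrow> \<bar>limit_poly r mu b0 bn wn x\<bar> \<le> K * d \<longrightarrow>
      (\<exists>y. limit_poly r mu b0 bn wn y = 0 \<and> \<bar>x - y\<bar> \<le> C * sqrt d)"
    by blast
  define d1 where "d1 = min d0 ((mu / (2 * bn * C))\<^sup>2)"
  have "0 < d1"
    using \<open>0 < d0\<close> \<open>0 < C\<close> mu_pos b0_nonneg b0_less_bn by (simp add: d1_def)
  moreover have "\<exists>y. wi_root r mu b0 bn wn y \<and> \<bar>x - y\<bar> \<le> C * sqrt d"
    if "0 \<le> d" "d \<le> d1" "0 \<le> x" "\<bar>limit_poly r mu b0 bn wn x\<bar> \<le> K * d" for d x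
  proof -
    have "d \<le> d0"
      using that(2) by (simp add: d1_def)
    with near[rule_format, OF that(1)] that(4) obtain y where y: "limit_poly r mu b0 bn wn y = 0" "\<bar>x - y\<bar> \<le> C * sqrt d"
      by blast
    have "sqrt d \<le> sqrt ((mu / (2 * bn * C))\<^sup>2)"
      using that(2) by (intro real_sqrt_le_mono) (simp add: d1_def)
    also have "\<dots> = mu / (2 * bn * C)"
      using \<open>0 < C\<close> mu_pos b0_nonneg b0_less_bn by simp
    finally have "C * sqrt d \<le> mu / (2 * bn)"
      using \<open>0 < C\<close> b0_nonneg b0_less_bn by (simp add: field_simps)
    with y that(3) show ?thesis
      using wi_root_if_limit_root_near_nonneg by (meson order_trans)
  qed
  ultimately show ?thesis
    using \<open>0 < C\<close> by blast
qed

lemma limit_poly_bounded_below: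
  assumes "\<not> (\<exists>y\<in>{0..1}. wi_root r mu b0 bn wn y)"
  shows "\<exists>m>0. \<forall>x\<in>{0..1}. m \<le> \<bar>limit_poly r mu b0 bn wn x\<bar>"
  using compact_nonvanishing_norm_bounded_below[OF compact_Icc continuous_on_limit_poly] assms
    wi_root_iff_limit_poly_eq_0_nonneg by auto

lemma limit_root_zero:
  "(wn + mu) * (mu + r) = b0 * wn + bn * mu \<Longrightarrow> wi_root r mu b0 bn wn 0"
  by (simp add: wi_root_iff_limit_poly_eq_0_nonneg limit_poly_def)

lemma no_limit_root_in_unit_interval:
  assumes "b0 * wn + bn * mu < (wn + mu) * (mu + r)"
  shows "\<not> (\<exists>y\<in>{0..1}. wi_root r mu b0 bn wn y)"
proof -
  have "b0 < mu + r"
  proof (rule ccontr)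
    assume "\<not> b0 < mu + r"
    then have "wn * (mu + r - b0) \<le> 0" and "mu * (mu + r - bn) \<le> 0"
      using wn_nonneg mu_pos b0_less_bn by (simp_all add: mult_nonneg_nonpos)
    moreover have "(wn + mu) * (mu + r) - (b0 * wn + bn * mu) = wn * (mu + r - b0) + mu * (mu + r - bn)"
      by (simp add: algebra_simps)
    ultimately show False
      using assms by linarith
  qed
  then have "0 \<le> b0 * (mu + wn) + bn * (mu + r - b0)"
    using b0_nonneg b0_less_bn mu_pos wn_nonneg by simp
  then have "0 < limit_poly r mu b0 bn wn y" if "0 \<le> y" for y
  proof -
    have "0 \<le> b0 * bn * y\<^sup>2" and "0 \<le> (b0 * (mu + wn) + bn * (mu + r - b0)) * y"
      using \<open>0 \<le> b0 * (mu + wn) + bn * (mu + r - b0)\<close> that b0_nonneg b0_less_bn by simp_all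
    with assms show ?thesis
      unfolding limit_poly_def by linarith
  qed
  then show ?thesis
    using wi_root_iff_limit_poly_eq_0_nonneg by force
qed

lemma unique_limit_root_in_unit_interval:
  assumes "(wn + mu) * (mu + r) < b0 * wn + bn * mu"
  shows "\<exists>!y. y \<in> {0..1} \<and> wi_root r mu b0 bn wn y"
proof -
  let ?P = "limit_poly r mu b0 bn wn"
  have "?P 0 \<le> 0"
    using assms by (simp add: limit_poly_def)
  moreover have "?P 1 = b0 * mu + bn * r + (wn + mu) * (mu + r)"
    by (simp add: limit_poly_def algebra_simps)
  then have "0 \<le> ?P 1"
    using b0_nonneg b0_less_bn mu_pos r_nonneg wn_nonneg by simp
  ultimately obtain y where y: "0 \<le> y" "y \<le> 1" "?P y = 0"
    using IVT'[of ?P 0 0 1] continuous_on_limit_poly by auto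
  have unique: "z = y" if "0 \<le> z" "?P z = 0" for z
    using quadratic_nonneg_root_unique[of "b0 * bn" "(wn + mu) * (mu + r) - b0 * wn - bn * mu"]
      y that assms b0_nonneg b0_less_bn
    unfolding limit_poly_def by simp
  show ?thesis
  proof (rule ex1I[of _ y])
    show "y \<in> {0..1} \<and> wi_root r mu b0 bn wn y"
      using y wi_root_iff_limit_poly_eq_0_nonneg by simp
  next
    fix z
    assume "z \<in> {0..1} \<and> wi_root r mu b0 bn wn z"
    then show "z = y"
      using wi_root_iff_limit_poly_eq_0_nonneg by (intro unique) auto
  qed
qed

end

section \<open>Equilibria for small waning rate\<close>

locale waning_immunity =
  fixes n :: nat and w r mu :: real and p beta :: "nat \<Rightarrow> real"
  assumes n_ge_1: "1 \<le> n" and w_nonneg: "0 \<le> w" and r_nonneg: "0 \<le> r" and mu_pos: "0 < mu"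
    and p_nonneg: "\<And>i. i \<le> n \<Longrightarrow> 0 \<le> p i" and p_le_1: "\<And>i. i \<le> n \<Longrightarrow> p i \<le> 1"
    and beta_0_nonneg: "0 \<le> beta 0" and beta_Suc_mono: "\<And>i. i < n \<Longrightarrow> beta i \<le> beta (Suc i)"
    and beta_0_less_beta_n: "beta 0 < beta n"
begin

lemma beta_mono:
  assumes "i \<le> j" and "j \<le> n"
  shows "beta i \<le> beta j"
proof (rule lift_Suc_mono_le_ivl[of "{..<n}"])
  show "{i..<j} \<subseteq> {..<n}"
    using assms(2) by auto
qed (use assms(1) beta_Suc_mono in simp_all)

lemma beta_nonneg: "i \<le> n \<Longrightarrow> 0 \<le> beta i"
  using beta_0_nonneg beta_mono[of 0 i] by simp

lemma beta_le_beta_n: "i \<le> n \<Longrightarrow> beta i \<le> beta n"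
  using beta_mono by simp

lemma omega_n_nonneg: "0 \<le> p n * w"
  using p_nonneg w_nonneg by simp

lemma sum_split_first_last:
  fixes f :: "nat \<Rightarrow> real"
  shows "(\<Sum>i=0..n. f i) = f 0 + (\<Sum>i=1..n-1. f i) + f n"
proof -
  obtain m where m: "n = Suc m"
    using n_ge_1 by (cases n) auto
  show ?thesis
    unfolding m by (simp add: sum.atLeast0_atMost_Suc sum.atLeast_Suc_atMost)
qed

end

text \<open>The compartments S_i are not assumed nonnegative; this is why S_0 has to be
  bounded a priori (lemma S_0_bounded).\<close>

locale endemic_equilibrium = waning_immunity +
  fixes d :: real and S :: "nat \<Rightarrow> real" and I :: real
  assumes equilibrium: "endemic_eq n d w r mu p beta S I"
    and d_nonneg: "0 \<le> d" and d_small: "real n * d \<le> mu / 2"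
    and I_nonneg: "0 \<le> I" and I_le_1: "I \<le> 1"
begin

lemma d_le_mu: "d \<le> mu"
proof -
  have "d \<le> real n * d"
    using n_ge_1 d_nonneg by (simp add: mult_le_cancel_right1)
  with d_small mu_pos show ?thesis by linarith
qed

lemma middle_compartment_eq:
  assumes "i \<in> {1..n-1}"
  shows "S i * (p i * w + (1 - p i) * d + beta i * I + mu) = (1 - p (i - 1)) * d * S (i - 1)"
  using equilibrium assms unfolding endemic_eq_def Let_def by (auto simp: algebra_simps)

lemma last_compartment_eq:
  "S n * (p n * w + beta n * I + mu) = mu + (1 - p (n - 1)) * d * S (n - 1)"
  using equilibrium unfolding endemic_eq_def Let_def by (auto simp: algebra_simps)

lemma compartments_sum: "S 0 + (\<Sum>i=1..n-1. S i) + S n + I = 1"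
  using equilibrium sum_split_first_last[of S] unfolding endemic_eq_def Let_def by simp

lemma infection_balance: "beta 0 * S 0 + (\<Sum>i=1..n-1. beta i * S i) + beta n * S n = r + mu"
proof -
  have "I * ((\<Sum>i=0..n. beta i * S i) - (r + mu)) = 0"
    using equilibrium unfolding endemic_eq_def Let_def by (simp add: algebra_simps)
  moreover have "I \<noteq> 0"
    using equilibrium unfolding endemic_eq_def Let_def by simp
  ultimately show ?thesis
    using sum_split_first_last[of "\<lambda>i. beta i * S i"] by simp
qed

lemma middle_compartment_step:
  assumes i: "i \<in> {1..n-1}"
  shows "mu * \<bar>S i\<bar> \<le> d * \<bar>S (i - 1)\<bar>"
proof -
  let ?D = "p i * w + (1 - p i) * d + beta i * I + mu"
  have "0 \<le> p (i - 1)" "p (i - 1) \<le> 1"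
    using i p_nonneg p_le_1 by auto
  have "0 \<le> p i * w" "0 \<le> (1 - p i) * d" "0 \<le> beta i * I"
    using i p_nonneg p_le_1 w_nonneg d_nonneg beta_nonneg I_nonneg by auto
  then have "mu \<le> ?D" by linarith
  then have "mu * \<bar>S i\<bar> \<le> ?D * \<bar>S i\<bar>"
    by (rule mult_right_mono) simp
  also have "\<dots> = \<bar>S i * ?D\<bar>"
    using \<open>mu \<le> ?D\<close> mu_pos by (simp add: abs_mult)
  also have "\<dots> = (1 - p (i - 1)) * d * \<bar>S (i - 1)\<bar>"
    using middle_compartment_eq[OF i] \<open>p (i - 1) \<le> 1\<close> d_nonneg by (simp add: abs_mult)
  also have "\<dots> \<le> d * \<bar>S (i - 1)\<bar>"
    using \<open>0 \<le> p (i - 1)\<close> \<open>p (i - 1) \<le> 1\<close> d_nonneg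
    by (intro mult_right_mono mult_left_le_one_le) auto
  finally show ?thesis .
qed

lemma middle_compartment_small:
  "i \<in> {1..n-1} \<Longrightarrow> mu * \<bar>S i\<bar> \<le> d * \<bar>S 0\<bar>"
proof (induction i)
  case (Suc i)
  show ?case
  proof (cases "i = 0")
    case True
    with Suc.prems show ?thesis
      using middle_compartment_step[of 1] by simp
  next
    case False
    with Suc have "mu * \<bar>S i\<bar> \<le> d * \<bar>S 0\<bar>"
      by simp
    moreover have "d * \<bar>S i\<bar> \<le> mu * \<bar>S i\<bar>"
      using d_le_mu by (simp add: mult_right_mono)
    ultimately show ?thesis
      using middle_compartment_step[OF Suc.prems] by simp
  qed
qed simp

lemma last_inflow_small: "\<bar>(1 - p (n - 1)) * d * S (n - 1)\<bar> \<le> d * \<bar>S 0\<bar>"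
proof -
  have "\<bar>S (n - 1)\<bar> \<le> \<bar>S 0\<bar>"
  proof (cases "n = 1")
    case False
    then have "mu * \<bar>S (n - 1)\<bar> \<le> d * \<bar>S 0\<bar>"
      using n_ge_1 by (intro middle_compartment_small) simp
    also have "\<dots> \<le> mu * \<bar>S 0\<bar>"
      using d_le_mu by (simp add: mult_right_mono)
    finally show ?thesis
      using mu_pos by simp
  qed simp
  moreover have "0 \<le> p (n - 1)" "p (n - 1) \<le> 1"
    using p_nonneg p_le_1 by simp_all
  ultimately show ?thesis
    using d_nonneg by (simp add: abs_mult mult_mono mult_left_le_one_le)
qed

lemma weighted_middle_sum_small:
  assumes "\<And>i. i \<in> {1..n-1} \<Longrightarrow> \<bar>g i\<bar> \<le> G"
  shows "mu * \<bar>\<Sum>i=1..n-1. g i * S i\<bar> \<le> (real n - 1) * G * d * \<bar>S 0\<bar>"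
proof -
  have "mu * \<bar>\<Sum>i=1..n-1. g i * S i\<bar> \<le> mu * (\<Sum>i=1..n-1. \<bar>g i * S i\<bar>)"
    using mu_pos by (intro mult_left_mono sum_abs) simp
  also have "\<dots> = (\<Sum>i=1..n-1. \<bar>g i\<bar> * (mu * \<bar>S i\<bar>))"
    by (simp add: sum_distrib_left abs_mult mult.left_commute)
  also have "\<dots> \<le> (\<Sum>i=1..n-1. G * (d * \<bar>S 0\<bar>))"
  proof (rule sum_mono)
    fix i
    assume i: "i \<in> {1..n-1}"
    then have "\<bar>g i\<bar> \<le> G" by (rule assms)
    moreover note middle_compartment_small[OF i]
    ultimately show "\<bar>g i\<bar> * (mu * \<bar>S i\<bar>) \<le> G * (d * \<bar>S 0\<bar>)"
      by (rule mult_mono') (use mu_pos in simp_all)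
  qed
  also have "\<dots> = (real n - 1) * G * d * \<bar>S 0\<bar>"
    using n_ge_1 by (simp add: of_nat_diff)
  finally show ?thesis .
qed

lemma last_compartment_small: "mu * \<bar>S n\<bar> \<le> mu + d * \<bar>S 0\<bar>"
proof -
  let ?D = "p n * w + beta n * I + mu"
  have "0 \<le> beta n * I"
    using beta_nonneg I_nonneg by simp
  then have "mu \<le> ?D"
    using omega_n_nonneg by linarith
  then have "mu * \<bar>S n\<bar> \<le> ?D * \<bar>S n\<bar>"
    by (rule mult_right_mono) simp
  also have "\<dots> = \<bar>S n * ?D\<bar>"
    using \<open>mu \<le> ?D\<close> mu_pos by (simp add: abs_mult)
  also have "\<dots> = \<bar>mu + (1 - p (n - 1)) * d * S (n - 1)\<bar>"
    using last_compartment_eq by simp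
  also have "\<dots> \<le> mu + d * \<bar>S 0\<bar>"
    using abs_triangle_ineq[of mu] last_inflow_small mu_pos by simp
  finally show ?thesis .
qed

lemma S_0_bounded: "\<bar>S 0\<bar> \<le> 4"
proof -
  let ?T = "\<Sum>i=1..n-1. S i"
  have "mu * \<bar>?T\<bar> \<le> (real n - 1) * d * \<bar>S 0\<bar>"
    using weighted_middle_sum_small[of "\<lambda>_. 1" 1] by simp
  have "\<bar>S 0\<bar> \<le> 1 + \<bar>?T\<bar> + \<bar>S n\<bar>"
    using compartments_sum I_nonneg I_le_1 by linarith
  then have "mu * \<bar>S 0\<bar> \<le> mu * (1 + \<bar>?T\<bar> + \<bar>S n\<bar>)"
    using mu_pos by (simp add: mult_left_mono)
  also have "\<dots> = mu + mu * \<bar>?T\<bar> + mu * \<bar>S n\<bar>"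
    by (simp add: algebra_simps)
  also have "\<dots> \<le> 2 * mu + real n * d * \<bar>S 0\<bar>"
    using \<open>mu * \<bar>?T\<bar> \<le> (real n - 1) * d * \<bar>S 0\<bar>\<close> last_compartment_small
    by (simp add: algebra_simps)
  also have "\<dots> \<le> 2 * mu + mu / 2 * \<bar>S 0\<bar>"
    using mult_right_mono[OF d_small abs_ge_zero[of "S 0"]] by simp
  finally have "mu * \<bar>S 0\<bar> \<le> mu * 4"
    by linarith
  then show ?thesis
    using mu_pos by simp
qed

lemma limit_poly_at_equilibrium:
  "limit_poly r mu (beta 0) (beta n) (p n * w) I =
     (\<Sum>i=1..n-1. (beta i - beta 0) * S i) * (p n * w + beta n * I + mu)
       + (beta n - beta 0) * ((1 - p (n - 1)) * d * S (n - 1))"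
  using limit_poly_residual[OF compartments_sum infection_balance last_compartment_eq]
  by (simp add: sum_subtractf sum_distrib_left left_diff_distrib mult.assoc)

lemma middle_residual_small:
  "\<bar>\<Sum>i=1..n-1. (beta i - beta 0) * S i\<bar> \<le> 4 * (real n - 1) * beta n * d / mu"
proof -
  have "\<bar>beta i - beta 0\<bar> \<le> beta n" if "i \<in> {1..n-1}" for i
  proof -
    from that have "i \<le> n" by auto
    then show ?thesis
      using beta_mono[of 0 i] beta_le_beta_n[of i] beta_0_nonneg by simp
  qed
  then have "mu * \<bar>\<Sum>i=1..n-1. (beta i - beta 0) * S i\<bar> \<le> (real n - 1) * beta n * d * \<bar>S 0\<bar>"
    by (rule weighted_middle_sum_small)
  also have "\<dots> \<le> (real n - 1) * beta n * d * 4"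
    using S_0_bounded n_ge_1 beta_0_nonneg beta_0_less_beta_n d_nonneg
    by (intro mult_left_mono) auto
  finally show ?thesis
    using mu_pos by (simp add: field_simps)
qed

lemma last_inflow_bounded: "\<bar>(1 - p (n - 1)) * d * S (n - 1)\<bar> \<le> 4 * d"
proof -
  have "d * \<bar>S 0\<bar> \<le> d * 4"
    using S_0_bounded d_nonneg by (rule mult_left_mono)
  with last_inflow_small show ?thesis
    by linarith
qed

lemma residual_bound:
  "\<bar>limit_poly r mu (beta 0) (beta n) (p n * w) I\<bar>
     \<le> 4 * beta n * ((real n - 1) * (p n * w + beta n + mu) / mu + 1) * d"
proof -
  let ?G = "\<Sum>i=1..n-1. (beta i - beta 0) * S i"
  let ?D = "p n * w + beta n * I + mu"
  let ?e = "(1 - p (n - 1)) * d * S (n - 1)"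
  have D: "0 \<le> ?D" "?D \<le> p n * w + beta n + mu"
    using omega_n_nonneg beta_0_nonneg beta_0_less_beta_n I_nonneg I_le_1 mu_pos
    by (simp_all add: mult_left_le)
  have "\<bar>limit_poly r mu (beta 0) (beta n) (p n * w) I\<bar> = \<bar>?G * ?D + (beta n - beta 0) * ?e\<bar>"
    by (simp only: limit_poly_at_equilibrium)
  also have "\<dots> \<le> \<bar>?G * ?D\<bar> + \<bar>(beta n - beta 0) * ?e\<bar>"
    by (rule abs_triangle_ineq)
  also have "\<dots> = \<bar>?G\<bar> * ?D + (beta n - beta 0) * \<bar>?e\<bar>"
    using D(1) beta_0_less_beta_n by (simp add: abs_mult)
  also have "\<dots> \<le> (4 * (real n - 1) * beta n * d / mu) * (p n * w + beta n + mu) + beta n * (4 * d)"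
  proof (rule add_mono)
    show "\<bar>?G\<bar> * ?D \<le> (4 * (real n - 1) * beta n * d / mu) * (p n * w + beta n + mu)"
      using middle_residual_small D(2) order_trans[OF abs_ge_zero middle_residual_small] D(1)
      by (rule mult_mono)
    show "(beta n - beta 0) * \<bar>?e\<bar> \<le> beta n * (4 * d)"
      using last_inflow_bounded beta_0_nonneg beta_0_less_beta_n by (intro mult_mono) auto
  qed
  also have "\<dots> = 4 * beta n * ((real n - 1) * (p n * w + beta n + mu) / mu + 1) * d"
    using mu_pos by (simp add: field_simps)
  finally show ?thesis .
qed

end

context waning_immunity
begin

lemma endemic_residual_bound:
  "\<exists>K\<ge>0. \<forall>d S I. 0 \<le> d \<longrightarrow> real n * d \<le> mu / 2 \<longrightarrow>
     endemic_eq n d w r mu p beta S I \<longrightarrow> 0 \<le> I \<longrightarrow> I \<le> 1 \<longrightarrow>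
     \<bar>limit_poly r mu (beta 0) (beta n) (p n * w) I\<bar> \<le> K * d"
proof (intro exI[of _ "4 * beta n * ((real n - 1) * (p n * w + beta n + mu) / mu + 1)"] conjI allI impI)
  show "0 \<le> 4 * beta n * ((real n - 1) * (p n * w + beta n + mu) / mu + 1)"
    using n_ge_1 beta_0_nonneg beta_0_less_beta_n omega_n_nonneg mu_pos by simp
  fix d S I
  assume "0 \<le> d" "real n * d \<le> mu / 2" "endemic_eq n d w r mu p beta S I" "0 \<le> I" "I \<le> 1"
  then interpret endemic_equilibrium n w r mu p beta d S I
    by unfold_locales
  show "\<bar>limit_poly r mu (beta 0) (beta n) (p n * w) I\<bar>
      \<le> 4 * beta n * ((real n - 1) * (p n * w + beta n + mu) / mu + 1) * d"
    by (rule residual_bound)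
qed

lemma below_delta_threshold:
  assumes "0 < e" and "0 \<le> d" and "d \<le> min e (mu / (2 * real n))"
  shows "real n * d \<le> mu / 2" and "d \<le> e"
  using assms n_ge_1 by (simp_all add: field_simps)

lemma endemic_near_limit_root:
  "\<exists>C>0. \<exists>d0>0. \<forall>d. 0 \<le> d \<and> d \<le> d0 \<longrightarrow>
     (\<forall>S I. endemic_eq n d w r mu p beta S I \<and> 0 \<le> I \<and> I \<le> 1 \<longrightarrow>
        (\<exists>y. wi_root r mu (beta 0) (beta n) (p n * w) y \<and> \<bar>I - y\<bar> \<le> C * sqrt d))"
proof -
  obtain K where "0 \<le> K" and residual:
    "\<forall>d S I. 0 \<le> d \<longrightarrow> real n * d \<le> mu / 2 \<longrightarrow> endemic_eq n d w r mu p beta S I \<longrightarrow>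
       0 \<le> I \<longrightarrow> I \<le> 1 \<longrightarrow> \<bar>limit_poly r mu (beta 0) (beta n) (p n * w) I\<bar> \<le> K * d"
    using endemic_residual_bound by blast
  obtain C d0 where "0 < C" "0 < d0" and near:
    "\<forall>d x. 0 \<le> d \<longrightarrow> d \<le> d0 \<longrightarrow> 0 \<le> x \<longrightarrow>
       \<bar>limit_poly r mu (beta 0) (beta n) (p n * w) x\<bar> \<le> K * d \<longrightarrow>
       (\<exists>y. wi_root r mu (beta 0) (beta n) (p n * w) y \<and> \<bar>x - y\<bar> \<le> C * sqrt d)"
    using limit_poly_near_root[OF r_nonneg mu_pos omega_n_nonneg beta_0_nonneg beta_0_less_beta_n \<open>0 \<le> K\<close>]
    by blast
  have "0 < min d0 (mu / (2 * real n))"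
    using \<open>0 < d0\<close> mu_pos n_ge_1 by simp
  moreover have "\<exists>y. wi_root r mu (beta 0) (beta n) (p n * w) y \<and> \<bar>I - y\<bar> \<le> C * sqrt d"
    if "0 \<le> d" "d \<le> min d0 (mu / (2 * real n))"
      and "endemic_eq n d w r mu p beta S I" "0 \<le> I" "I \<le> 1" for d S I
    using near residual below_delta_threshold[OF \<open>0 < d0\<close> that(1,2)] that by blast
  ultimately show ?thesis
    using \<open>0 < C\<close> by blast
qed

lemma no_endemic_without_limit_root:
  assumes "\<not> (\<exists>y\<in>{0..1}. wi_root r mu (beta 0) (beta n) (p n * w) y)"
  shows "\<exists>d0>0. \<forall>d. 0 \<le> d \<and> d \<le> d0 \<longrightarrow>
           \<not> (\<exists>S I. endemic_eq n d w r mu p beta S I \<and> 0 \<le> I \<and> I \<le> 1)"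
proof -
  obtain K where "0 \<le> K" and residual:
    "\<forall>d S I. 0 \<le> d \<longrightarrow> real n * d \<le> mu / 2 \<longrightarrow> endemic_eq n d w r mu p beta S I \<longrightarrow>
       0 \<le> I \<longrightarrow> I \<le> 1 \<longrightarrow> \<bar>limit_poly r mu (beta 0) (beta n) (p n * w) I\<bar> \<le> K * d"
    using endemic_residual_bound by blast
  obtain m where "0 < m" and m: "\<forall>x\<in>{0..1}. m \<le> \<bar>limit_poly r mu (beta 0) (beta n) (p n * w) x\<bar>"
    using limit_poly_bounded_below[OF r_nonneg mu_pos omega_n_nonneg beta_0_nonneg beta_0_less_beta_n assms]
    by blast
  define e where "e = m / (K + 1)"
  have "0 < e"
    using \<open>0 < m\<close> \<open>0 \<le> K\<close> by (simp add: e_def)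
  have "False"
    if "0 \<le> d" "d \<le> min e (mu / (2 * real n))"
      and "endemic_eq n d w r mu p beta S I" "0 \<le> I" "I \<le> 1" for d S I
  proof -
    have "m \<le> K * d"
      using m residual below_delta_threshold[OF \<open>0 < e\<close> that(1,2)] that by (meson atLeastAtMost_iff order_trans)
    also have "\<dots> \<le> K * e"
      using below_delta_threshold[OF \<open>0 < e\<close> that(1,2)] \<open>0 \<le> K\<close> by (simp add: mult_left_mono)
    also have "\<dots> < m"
      using \<open>0 < m\<close> \<open>0 \<le> K\<close> by (simp add: e_def field_simps)
    finally show False by simp
  qed
  moreover have "0 < min e (mu / (2 * real n))"
    using \<open>0 < e\<close> mu_pos n_ge_1 by simp
  ultimately show ?thesis
    by blast
qed

end

theorem lemma1:
  fixes n :: nat and w r mu :: real and p beta :: "nat \<Rightarrow> real"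
  assumes hn: "n \<ge> 1"
    and hw: "w \<ge> 0" and hr: "r > 0" and hmu: "mu > 0"
    and hp0: "p 0 = 0" and hp: "\<forall>i\<in>{1..n}. 0 \<le> p i \<and> p i \<le> 1"
    and hb0: "0 \<le> beta 0" and hbmono: "\<forall>i<n. beta i \<le> beta (Suc i)"
    and hbn: "beta 0 < beta n"
  shows
    "(\<exists>C>0. \<exists>d0>0. \<forall>d. 0 \<le> d \<and> d \<le> d0 \<longrightarrow>
        (\<forall>S I. endemic_eq n d w r mu p beta S I \<and> 0 \<le> I \<and> I \<le> 1 \<longrightarrow>
           (\<exists>y. wi_root r mu (beta 0) (beta n) (p n * w) y \<and> \<bar>I - y\<bar> \<le> C * sqrt d)))
     \<and> ((\<not> (\<exists>y\<in>{0..1}. wi_root r mu (beta 0) (beta n) (p n * w) y)) \<longrightarrow>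
        (\<exists>d0>0. \<forall>d. 0 \<le> d \<and> d \<le> d0 \<longrightarrow>
           \<not> (\<exists>S I. endemic_eq n d w r mu p beta S I \<and> 0 \<le> I \<and> I \<le> 1)))
     \<and> ((p n * w + mu) * (mu + r) > beta 0 * (p n * w) + beta n * mu \<longrightarrow>
        \<not> (\<exists>y\<in>{0..1}. wi_root r mu (beta 0) (beta n) (p n * w) y))
     \<and> ((p n * w + mu) * (mu + r) < beta 0 * (p n * w) + beta n * mu \<longrightarrow>
        (\<exists>!y. y \<in> {0..1} \<and> wi_root r mu (beta 0) (beta n) (p n * w) y))
     \<and> ((p n * w + mu) * (mu + r) = beta 0 * (p n * w) + beta n * mu \<longrightarrow>
        wi_root r mu (beta 0) (beta n) (p n * w) 0)"
proof -
  have p_range: "0 \<le> p i \<and> p i \<le> 1" if "i \<le> n" for i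
    using hp0 hp that by (cases "i = 0") auto
  interpret waning_immunity n w r mu p beta
    using hn hw hr hmu p_range hb0 hbmono hbn by unfold_locales auto
  note limit_equation = r_nonneg mu_pos omega_n_nonneg beta_0_nonneg beta_0_less_beta_n
  show ?thesis
    using endemic_near_limit_root no_endemic_without_limit_root
      no_limit_root_in_unit_interval[OF limit_equation]
      unique_limit_root_in_unit_interval[OF limit_equation]
      limit_root_zero[OF limit_equation]
    by blast
qed

end
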